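(* There exist large sets with multiplicity LS$(4,5,11;2)$, LS$(3,4,10;2)$, and LS$(5,6,12;2)$.
   Context: A Steiner system S$(t,k,n)$ is a pair $(Q,B)$ where $Q$ is an $n$-set and $B$ is a collection of $k$-subsets (blocks) of $Q$ such that every $t$-subset of $Q$ is contained in exactly one block. A large set with multiplicity $\mu$, LS$(t,k,n;\mu)$, is a family (the same system may occur more than once) of Steiner systems S$(t,k,n)$ on a common $n$-set $Q$ such that every $k$-subset of $Q$ is a block of exactly $\mu$ of the systems. *)

theory Defs
  imports Main "HOL-Library.Multiset"
begin

definition steiner_system :: "nat \<Rightarrow> nat \<Rightarrow> 'a set \<Rightarrow> 'a set set \<Rightarrow> bool" where
  "steiner_system t k Q B \<longleftrightarrow>
     finite Q \<and>
     (\<forall>b\<in>B. b \<subseteq> Q \<and> card b = k) \<and>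
     (\<forall>T. T \<subseteq> Q \<and> card T = t \<longrightarrow> (\<exists>!b. b \<in> B \<and> T \<subseteq> b))"

definition large_set_mult :: "nat \<Rightarrow> nat \<Rightarrow> nat \<Rightarrow> nat \<Rightarrow> 'a set \<Rightarrow> 'a set set multiset \<Rightarrow> bool" where
  "large_set_mult t k n mu Q L \<longleftrightarrow>
     finite Q \<and> card Q = n \<and>
     (\<forall>B\<in>#L. steiner_system t k Q B) \<and>
     (\<forall>K. K \<subseteq> Q \<and> card K = k \<longrightarrow> size (filter_mset (\<lambda>B. K \<in> B) L) = mu)"

definition LS_exists :: "nat \<Rightarrow> nat \<Rightarrow> nat \<Rightarrow> nat \<Rightarrow> bool" where
  "LS_exists t k n mu \<longleftrightarrow> (\<exists>L. large_set_mult t k n mu {..<n} (L :: nat set set multiset))"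

end

theory Submission
  imports Defs
begin

(* The 132 hexads listed below form a Steiner system S(5,6,12), and their images under fourteen
   permutations of the points (one of them taken twice) cover every 6-set exactly twice; this is
   an LS(5,6,12;2). Both facts are finite checks, which the simplifier carries out by running
   through all 5-sets and 6-sets as bit vectors and looking them up in a binary trie of the
   hexads. Deriving at a point (keeping the blocks through it and deleting the point) turns an
   LS(t+1,k+1,n+1;mu) into an LS(t,k,n;mu), which yields LS(4,5,11;2) and LS(3,4,10;2). *)

section \<open>Steiner systems and derived designs\<close>

lemma steiner_system_image:
  assumes f: "bij_betw f Q Q'" and S: "steiner_system t k Q B"
  shows "steiner_system t k Q' ((`) f ` B)"
proof -
  have fin: "finite Q" and blocks: "\<And>b. b \<in> B \<Longrightarrow> b \<subseteq> Q \<and> card b = k"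
    and unique: "\<And>T. T \<subseteq> Q \<Longrightarrow> card T = t \<Longrightarrow> \<exists>!b. b \<in> B \<and> T \<subseteq> b"
    using S unfolding steiner_system_def by auto
  have inj: "inj_on f Q" and onto: "f ` Q = Q'"
    using f by (auto simp: bij_betw_def)
  have card_image_f: "card (f ` A) = card A" if "A \<subseteq> Q" for A
    using card_image[OF inj_on_subset[OF inj that]] .
  show ?thesis
    unfolding steiner_system_def
  proof (intro conjI allI impI)
    show "finite Q'"
      using fin onto by blast
  next
    show "\<forall>b'\<in>(`) f ` B. b' \<subseteq> Q' \<and> card b' = k"
      using blocks card_image_f onto by auto
  next
    fix T' assume T': "T' \<subseteq> Q' \<and> card T' = t"
    then obtain T where T: "T \<subseteq> Q" "T' = f ` T"
      using onto by (metis subset_imageE)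
    then have "card T = t"
      using T' card_image_f by simp
    then obtain b where b: "b \<in> B" "T \<subseteq> b" and uniq: "\<And>c. c \<in> B \<Longrightarrow> T \<subseteq> c \<Longrightarrow> c = b"
      using unique[OF T(1)] by metis
    show "\<exists>!b'. b' \<in> (`) f ` B \<and> T' \<subseteq> b'"
    proof
      show "f ` b \<in> (`) f ` B \<and> T' \<subseteq> f ` b"
        using b T by auto
    next
      fix b' assume "b' \<in> (`) f ` B \<and> T' \<subseteq> b'"
      then obtain c where c: "c \<in> B" "b' = f ` c" "f ` T \<subseteq> f ` c"
        using T by blast
      have "T \<subseteq> c"
      proof
        fix a assume "a \<in> T"
        then have "f a \<in> f ` c"
          using c(3) by blast
        then show "a \<in> c"
          using inj_on_image_mem_iff[OF inj] \<open>a \<in> T\<close> T(1) blocks[OF c(1)] by blast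
      qed
      then show "b' = f ` b"
        using uniq c by simp
    qed
  qed
qed

lemma mem_image_blocks_iff:
  assumes f: "bij_betw f Q Q'" and B: "\<And>b. b \<in> B \<Longrightarrow> b \<subseteq> Q" and K: "K \<subseteq> Q'"
  shows "K \<in> (`) f ` B \<longleftrightarrow> f -` K \<inter> Q \<in> B"
proof
  assume "K \<in> (`) f ` B"
  then obtain b where "b \<in> B" "K = f ` b"
    by blast
  moreover have "f -` (f ` b) \<inter> Q = b"
    using B[OF \<open>b \<in> B\<close>] f by (auto simp: bij_betw_def inj_on_def)
  ultimately show "f -` K \<inter> Q \<in> B"
    by simp
next
  assume "f -` K \<inter> Q \<in> B"
  moreover have "f ` (f -` K \<inter> Q) = K"
    using K f by (auto simp: bij_betw_def)
  ultimately show "K \<in> (`) f ` B"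
    by (metis image_eqI)
qed

lemma steiner_system_by_extensions:
  assumes fin: "finite Q" and blocks: "\<And>b. b \<in> B \<Longrightarrow> b \<subseteq> Q \<and> card b = Suc t"
    and ext: "\<And>T. T \<subseteq> Q \<Longrightarrow> card T = t \<Longrightarrow> card {i \<in> Q - T. insert i T \<in> B} = 1"
  shows "steiner_system t (Suc t) Q B"
  unfolding steiner_system_def
proof (intro conjI ballI allI impI)
  fix T assume T: "T \<subseteq> Q \<and> card T = t"
  then have finT: "finite T"
    using fin finite_subset by blast
  obtain i where i: "{i \<in> Q - T. insert i T \<in> B} = {i}"
    using ext T by (metis card_1_singletonE)
  show "\<exists>!b. b \<in> B \<and> T \<subseteq> b"
  proof
    show "insert i T \<in> B \<and> T \<subseteq> insert i T"
      using i by blast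
  next
    fix b assume b: "b \<in> B \<and> T \<subseteq> b"
    then have "card (b - T) = 1"
      using blocks T finT by (simp add: card_Diff_subset)
    then obtain j where j: "b - T = {j}"
      by (metis card_1_singletonE)
    then have "b = insert j T" "j \<in> Q - T"
      using b blocks by auto
    then have "j = i"
      using b i by blast
    then show "b = insert i T"
      using \<open>b = insert j T\<close> by simp
  qed
qed (use fin blocks in auto)

definition derived :: "'a \<Rightarrow> 'a set set \<Rightarrow> 'a set set" where
  "derived x B = (\<lambda>b. b - {x}) ` {b \<in> B. x \<in> b}"

lemma mem_derived: "x \<notin> K \<Longrightarrow> K \<in> derived x B \<longleftrightarrow> insert x K \<in> B"
  by (auto simp: derived_def insert_absorb image_iff intro!: exI[of _ "insert x K"])

lemma steiner_system_derived:
  assumes S: "steiner_system (Suc t) (Suc k) Q B" and x: "x \<in> Q"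
  shows "steiner_system t k (Q - {x}) (derived x B)"
proof -
  have fin: "finite Q" and blocks: "\<And>b. b \<in> B \<Longrightarrow> b \<subseteq> Q \<and> card b = Suc k"
    and unique: "\<And>T. T \<subseteq> Q \<Longrightarrow> card T = Suc t \<Longrightarrow> \<exists>!b. b \<in> B \<and> T \<subseteq> b"
    using S unfolding steiner_system_def by auto
  show ?thesis
    unfolding steiner_system_def
  proof (intro conjI allI impI)
    show "finite (Q - {x})"
      using fin by simp
  next
    show "\<forall>d\<in>derived x B. d \<subseteq> Q - {x} \<and> card d = k"
      using blocks fin finite_subset by (fastforce simp: derived_def)
  next
    fix T assume T: "T \<subseteq> Q - {x} \<and> card T = t"
    then have "x \<notin> T" "finite T"
      using fin finite_subset[of T Q] by auto
    then have "insert x T \<subseteq> Q" "card (insert x T) = Suc t"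
      using T x by auto
    then obtain b where b: "b \<in> B" "insert x T \<subseteq> b"
      and uniq: "\<And>c. c \<in> B \<Longrightarrow> insert x T \<subseteq> c \<Longrightarrow> c = b"
      using unique by metis
    show "\<exists>!d. d \<in> derived x B \<and> T \<subseteq> d"
    proof
      show "b - {x} \<in> derived x B \<and> T \<subseteq> b - {x}"
        using b T by (auto simp: derived_def)
    next
      fix d assume d: "d \<in> derived x B \<and> T \<subseteq> d"
      then have "x \<notin> d"
        by (auto simp: derived_def)
      then have "insert x d \<in> B"
        using d mem_derived by metis
      then have "insert x d = b"
        using d uniq by blast
      then show "d = b - {x}"
        using \<open>x \<notin> d\<close> by auto
    qed
  qed
qed

lemma large_set_mult_derived:
  assumes L: "large_set_mult (Suc t) (Suc k) (Suc n) \<mu> Q L" and x: "x \<in> Q"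
  shows "large_set_mult t k n \<mu> (Q - {x}) (image_mset (derived x) L)"
  unfolding large_set_mult_def
proof (intro conjI ballI allI impI)
  have fin: "finite Q" and card: "card Q = Suc n"
    and mult: "\<And>K. K \<subseteq> Q \<Longrightarrow> card K = Suc k \<Longrightarrow> size (filter_mset (\<lambda>B. K \<in> B) L) = \<mu>"
    using L unfolding large_set_mult_def by auto
  show "finite (Q - {x})" "card (Q - {x}) = n"
    using fin card x by auto
  show "steiner_system t k (Q - {x}) D" if "D \<in># image_mset (derived x) L" for D
    using that L x unfolding large_set_mult_def by (auto intro: steiner_system_derived)
  fix K assume K: "K \<subseteq> Q - {x} \<and> card K = k"
  then have "x \<notin> K" "finite K"
    using fin finite_subset[of K Q] by auto
  then have "insert x K \<subseteq> Q" "card (insert x K) = Suc k"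
    using K x by auto
  moreover have "filter_mset (\<lambda>D. K \<in> D) (image_mset (derived x) L)
      = image_mset (derived x) (filter_mset (\<lambda>B. insert x K \<in> B) L)"
    using \<open>x \<notin> K\<close> by (simp add: filter_mset_image_mset mem_derived)
  ultimately show "size (filter_mset (\<lambda>D. K \<in> D) (image_mset (derived x) L)) = \<mu>"
    using mult by simp
qed

lemma LS_exists_derived:
  assumes "LS_exists (Suc t) (Suc k) (Suc n) \<mu>"
  shows "LS_exists t k n \<mu>"
proof -
  obtain L :: "nat set set multiset" where "large_set_mult (Suc t) (Suc k) (Suc n) \<mu> {..<Suc n} L"
    using assms unfolding LS_exists_def by blast
  then have "large_set_mult t k n \<mu> ({..<Suc n} - {n}) (image_mset (derived n) L)"
    by (rule large_set_mult_derived) simp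
  moreover have "{..<Suc n} - {n} = {..<n}"
    by auto
  ultimately show ?thesis
    unfolding LS_exists_def by auto
qed

section \<open>Bit vectors and tries\<close>

definition char_vec :: "nat \<Rightarrow> nat set \<Rightarrow> bool list" where
  "char_vec n K = map (\<lambda>i. i \<in> K) [0..<n]"

lemma length_char_vec [simp]: "length (char_vec n K) = n"
  by (simp add: char_vec_def)

lemma count_list_char_vec: "K \<subseteq> {..<n} \<Longrightarrow> count_list (char_vec n K) True = card K"
proof -
  assume "K \<subseteq> {..<n}"
  then have "{i. i \<in> K} \<inter> set [0..<n] = K"
    by auto
  then show ?thesis
    by (simp add: char_vec_def count_list_eq_length_filter filter_map o_def distinct_length_filter)
qed

lemma char_vec_eq_iff:
  assumes "K \<subseteq> {..<n}" "K' \<subseteq> {..<n}"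
  shows "char_vec n K = char_vec n K' \<longleftrightarrow> K = K'"
proof
  assume "char_vec n K = char_vec n K'"
  then have "\<forall>i<n. i \<in> K \<longleftrightarrow> i \<in> K'"
    by (simp add: char_vec_def map_eq_conv)
  then show "K = K'"
    using assms by blast
qed simp

lemma char_vec_mem_map_iff:
  assumes "K \<subseteq> {..<n}" "\<And>b. b \<in> set bs \<Longrightarrow> b \<subseteq> {..<n}"
  shows "char_vec n K \<in> set (map (char_vec n) bs) \<longleftrightarrow> K \<in> set bs"
  using assms char_vec_eq_iff by auto

lemma char_vec_empty: "char_vec n {} = replicate n False"
  by (simp add: char_vec_def map_replicate_const)

lemma char_vec_insert: "i < n \<Longrightarrow> char_vec n (insert i K) = (char_vec n K)[i := True]"
  by (rule nth_equalityI) (auto simp: char_vec_def nth_list_update)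

lemma char_vec_vimage_nth:
  assumes "length \<sigma> = n" "set \<sigma> \<subseteq> {..<n}"
  shows "char_vec n ((!) \<sigma> -` K \<inter> {..<n}) = map ((!) (char_vec n K)) \<sigma>"
proof (rule nth_equalityI)
  fix i assume "i < length (char_vec n ((!) \<sigma> -` K \<inter> {..<n}))"
  then have "i < n" "\<sigma> ! i < n"
    using assms nth_mem by fastforce+
  then show "char_vec n ((!) \<sigma> -` K \<inter> {..<n}) ! i = map ((!) (char_vec n K)) \<sigma> ! i"
    using assms(1) by (simp add: char_vec_def)
qed (use assms in simp)

lemma all_length_Suc:
  "(\<forall>w. length w = Suc n \<and> R w \<longrightarrow> S w) \<longleftrightarrow> (\<forall>b w. length w = n \<and> R (b # w) \<longrightarrow> S (b # w))"
  by (metis length_Suc_conv)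

fun all_weight_vecs :: "nat \<Rightarrow> nat \<Rightarrow> (bool list \<Rightarrow> bool) \<Rightarrow> bool" where
  "all_weight_vecs 0 0 P = P []"
| "all_weight_vecs (Suc k) 0 P = True"
| "all_weight_vecs 0 (Suc n) P = all_weight_vecs 0 n (\<lambda>w. P (False # w))"
| "all_weight_vecs (Suc k) (Suc n) P =
     (all_weight_vecs k n (\<lambda>w. P (True # w)) \<and> all_weight_vecs (Suc k) n (\<lambda>w. P (False # w)))"

lemma all_weight_vecs_iff:
  "all_weight_vecs k n P \<longleftrightarrow> (\<forall>w. length w = n \<and> count_list w True = k \<longrightarrow> P w)"
proof (induction k n P rule: all_weight_vecs.induct)
  case (3 n P)
  then show ?case
    by (simp add: all_length_Suc all_bool_eq)
next
  case (4 k n P)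
  then show ?case
    by (auto simp: all_length_Suc all_bool_eq)
qed simp_all

lemma all_weight_vecs_char_vec:
  "all_weight_vecs k n P \<Longrightarrow> K \<subseteq> {..<n} \<Longrightarrow> card K = k \<Longrightarrow> P (char_vec n K)"
  by (simp add: all_weight_vecs_iff count_list_char_vec)

fun flips :: "bool list \<Rightarrow> bool list list" where
  "flips [] = []"
| "flips (b # w) = (if b then [] else [True # w]) @ map ((#) b) (flips w)"

lemma flips_map:
  "distinct xs \<Longrightarrow> flips (map f xs) = map (\<lambda>x. map (f(x := True)) xs) (filter (\<lambda>x. \<not> f x) xs)"
proof (induction xs)
  case (Cons x xs)
  have "map (f(x := True)) xs = map f xs" and "\<And>y. y \<in> set xs \<Longrightarrow> (f(y := True)) x = f x"
    using Cons.prems by auto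
  then show ?case
    using Cons by (auto simp: comp_def)
qed simp

lemma flips_char_vec:
  "flips (char_vec n T) = map (\<lambda>i. char_vec n (insert i T)) (filter (\<lambda>i. i \<notin> T) [0..<n])"
proof -
  have "(\<lambda>j. j \<in> T)(i := True) = (\<lambda>j. j \<in> insert i T)" for i
    by (auto simp: fun_eq_iff)
  then show ?thesis
    by (simp add: char_vec_def flips_map)
qed

datatype bit_trie = Leaf bool | Node bit_trie bit_trie

fun trie_member :: "bool list \<Rightarrow> bit_trie \<Rightarrow> bool" where
  "trie_member [] (Leaf b) = b"
| "trie_member (False # w) (Node l r) = trie_member w l"
| "trie_member (True # w) (Node l r) = trie_member w r"
| "trie_member _ _ = False"

fun trie_of :: "nat \<Rightarrow> bool list list \<Rightarrow> bit_trie" where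
  "trie_of 0 ws = Leaf (ws \<noteq> [])"
| "trie_of (Suc n) ws =
     Node (trie_of n (map tl (filter (\<lambda>w. \<not> hd w) ws))) (trie_of n (map tl (filter hd ws)))"

lemma trie_member_trie_of:
  "(\<And>v. v \<in> set ws \<Longrightarrow> length v = n) \<Longrightarrow> trie_member w (trie_of n ws) \<longleftrightarrow> w \<in> set ws"
proof (induction n arbitrary: ws w)
  case 0
  then have "ws \<noteq> [] \<longleftrightarrow> [] \<in> set ws"
    by (cases ws) auto
  then show ?case
    using 0 by (cases w) auto
next
  case (Suc n)
  let ?tails = "\<lambda>b. map tl (filter (\<lambda>v. hd v = b) ws)"
  have lengths: "\<And>v. v \<in> set (?tails b) \<Longrightarrow> length v = n" for b
    using Suc.prems by auto
  have mem_tails: "b # v \<in> set ws \<longleftrightarrow> v \<in> set (?tails b)" for b v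
    using Suc.prems by (force simp: image_iff length_Suc_conv)
  show ?case
  proof (cases w)
    case Nil
    then show ?thesis
      using Suc.prems by fastforce
  next
    case (Cons b v)
    then have "trie_member w (trie_of (Suc n) ws) \<longleftrightarrow> trie_member v (trie_of n (?tails b))"
      by (cases b) simp_all
    also have "\<dots> \<longleftrightarrow> v \<in> set (?tails b)"
      using Suc.IH lengths by blast
    also have "\<dots> \<longleftrightarrow> w \<in> set ws"
      using mem_tails Cons by simp
    finally show ?thesis .
  qed
qed

(* Congruence rules for evaluating the checks below with the simplifier: the continuation of
   all_weight_vecs, the predicate of filter and the trie argument of trie_member are left alone
   until the recursion reaches them, so the large trie literal is never simplified again. *)

lemma all_weight_vecs_weak_cong:
  "k = k' \<Longrightarrow> n = n' \<Longrightarrow> all_weight_vecs k n P = all_weight_vecs k' n' P"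
  by simp

lemma trie_member_weak_cong: "w = w' \<Longrightarrow> trie_member w t = trie_member w' t"
  by simp

lemma filter_weak_cong: "xs = ys \<Longrightarrow> filter P xs = filter P ys"
  by simp

section \<open>The hexads\<close>

definition hexads :: "nat set list" where
  "hexads =
    [{0,1,2,3,4,9}, {0,1,2,3,5,11}, {0,1,2,3,6,7}, {0,1,2,3,8,10}, {0,1,2,4,5,7}, {0,1,2,4,6,8},
     {0,1,2,4,10,11}, {0,1,2,5,6,10}, {0,1,2,5,8,9}, {0,1,2,6,9,11}, {0,1,2,7,8,11}, {0,1,2,7,9,10},
     {0,1,3,4,5,8}, {0,1,3,4,6,10}, {0,1,3,4,7,11}, {0,1,3,5,6,9}, {0,1,3,5,7,10}, {0,1,3,6,8,11},
     {0,1,3,7,8,9}, {0,1,3,9,10,11}, {0,1,4,5,6,11}, {0,1,4,5,9,10}, {0,1,4,6,7,9}, {0,1,4,7,8,10},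
     {0,1,4,8,9,11}, {0,1,5,6,7,8}, {0,1,5,7,9,11}, {0,1,5,8,10,11}, {0,1,6,7,10,11}, {0,1,6,8,9,10},
     {0,2,3,4,5,6}, {0,2,3,4,7,10}, {0,2,3,4,8,11}, {0,2,3,5,7,8}, {0,2,3,5,9,10}, {0,2,3,6,8,9},
     {0,2,3,6,10,11}, {0,2,3,7,9,11}, {0,2,4,5,8,10}, {0,2,4,5,9,11}, {0,2,4,6,7,11}, {0,2,4,6,9,10},
     {0,2,4,7,8,9}, {0,2,5,6,7,9}, {0,2,5,6,8,11}, {0,2,5,7,10,11}, {0,2,6,7,8,10}, {0,2,8,9,10,11},
     {0,3,4,5,7,9}, {0,3,4,5,10,11}, {0,3,4,6,7,8}, {0,3,4,6,9,11}, {0,3,4,8,9,10}, {0,3,5,6,7,11},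
     {0,3,5,6,8,10}, {0,3,5,8,9,11}, {0,3,6,7,9,10}, {0,3,7,8,10,11}, {0,4,5,6,7,10}, {0,4,5,6,8,9},
     {0,4,5,7,8,11}, {0,4,6,8,10,11}, {0,4,7,9,10,11}, {0,5,6,9,10,11}, {0,5,7,8,9,10}, {0,6,7,8,9,11},
     {1,2,3,4,5,10}, {1,2,3,4,6,11}, {1,2,3,4,7,8}, {1,2,3,5,6,8}, {1,2,3,5,7,9}, {1,2,3,6,9,10},
     {1,2,3,7,10,11}, {1,2,3,8,9,11}, {1,2,4,5,6,9}, {1,2,4,5,8,11}, {1,2,4,6,7,10}, {1,2,4,7,9,11},
     {1,2,4,8,9,10}, {1,2,5,6,7,11}, {1,2,5,7,8,10}, {1,2,5,9,10,11}, {1,2,6,7,8,9}, {1,2,6,8,10,11},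
     {1,3,4,5,6,7}, {1,3,4,5,9,11}, {1,3,4,6,8,9}, {1,3,4,7,9,10}, {1,3,4,8,10,11}, {1,3,5,6,10,11},
     {1,3,5,7,8,11}, {1,3,5,8,9,10}, {1,3,6,7,8,10}, {1,3,6,7,9,11}, {1,4,5,6,8,10}, {1,4,5,7,8,9},
     {1,4,5,7,10,11}, {1,4,6,7,8,11}, {1,4,6,9,10,11}, {1,5,6,7,9,10}, {1,5,6,8,9,11}, {1,7,8,9,10,11},
     {2,3,4,5,7,11}, {2,3,4,5,8,9}, {2,3,4,6,7,9}, {2,3,4,6,8,10}, {2,3,4,9,10,11}, {2,3,5,6,7,10},
     {2,3,5,6,9,11}, {2,3,5,8,10,11}, {2,3,6,7,8,11}, {2,3,7,8,9,10}, {2,4,5,6,7,8}, {2,4,5,6,10,11},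
     {2,4,5,7,9,10}, {2,4,6,8,9,11}, {2,4,7,8,10,11}, {2,5,6,8,9,10}, {2,5,7,8,9,11}, {2,6,7,9,10,11},
     {3,4,5,6,8,11}, {3,4,5,6,9,10}, {3,4,5,7,8,10}, {3,4,6,7,10,11}, {3,4,7,8,9,11}, {3,5,6,7,8,9},
     {3,5,7,9,10,11}, {3,6,8,9,10,11}, {4,5,6,7,9,11}, {4,5,8,9,10,11}, {4,6,7,8,9,10}, {5,6,7,8,10,11}]"

lemma hexads_subset: "b \<in> set hexads \<Longrightarrow> b \<subseteq> {..<12} \<and> card b = 6"
  by (simp add: hexads_def, elim disjE) simp_all

definition hexad_trie :: bit_trie where
  "hexad_trie = trie_of 12 (map (char_vec 12) hexads)"

(* Computed once, so that the checks only walk the literal trie. *)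
schematic_goal hexad_trie_unfolded: "hexad_trie = ?t"
  by (simp add: hexad_trie_def hexads_def numeral_eq_Suc char_vec_empty char_vec_insert)

lemmas trie_member_hexad_trie = arg_cong[where f = "trie_member w", OF hexad_trie_unfolded] for w

lemma mem_hexads_iff:
  assumes "K \<subseteq> {..<12}"
  shows "K \<in> set hexads \<longleftrightarrow> trie_member (char_vec 12 K) hexad_trie"
proof -
  have "trie_member (char_vec 12 K) hexad_trie \<longleftrightarrow> char_vec 12 K \<in> set (map (char_vec 12) hexads)"
    unfolding hexad_trie_def by (rule trie_member_trie_of) auto
  also have "\<dots> \<longleftrightarrow> K \<in> set hexads"
    using assms hexads_subset by (intro char_vec_mem_map_iff) auto
  finally show ?thesis ..
qed

lemma hexads_unique_extension_check:
  "all_weight_vecs 5 12 (\<lambda>w. length (filter (\<lambda>v. trie_member v hexad_trie) (flips w)) = 1)"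
  by (simp add: trie_member_hexad_trie numeral_eq_Suc
      cong: all_weight_vecs_weak_cong trie_member_weak_cong filter_weak_cong)

lemma steiner_system_hexads: "steiner_system 5 6 {..<12} (set hexads)"
proof -
  have "steiner_system 5 (Suc 5) {..<12} (set hexads)"
  proof (rule steiner_system_by_extensions)
    fix T :: "nat set" assume T: "T \<subseteq> {..<12}" "card T = 5"
    have "1 = length (filter (\<lambda>v. trie_member v hexad_trie) (flips (char_vec 12 T)))"
      using all_weight_vecs_char_vec[OF hexads_unique_extension_check T] by simp
    also have "\<dots> = length (filter (\<lambda>i. insert i T \<in> set hexads) (filter (\<lambda>i. i \<notin> T) [0..<12]))"
      unfolding flips_char_vec filter_map comp_def length_map
      using T(1) by (intro arg_cong[where f = length] filter_cong) (auto simp: mem_hexads_iff)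
    also have "\<dots> = card {i \<in> {..<12} - T. insert i T \<in> set hexads}"
      unfolding filter_filter distinct_length_filter[OF distinct_upt]
      by (intro arg_cong[where f = card]) auto
    finally show "card {i \<in> {..<12} - T. insert i T \<in> set hexads} = 1"
      by simp
  qed (use hexads_subset in auto)
  then show ?thesis
    by simp
qed

(* The last permutation is listed twice, so its system occurs twice in the large set. *)
definition hexad_perms :: "nat list list" where
  "hexad_perms =
    [[1,0,3,2,4,5,6,8,9,7,10,11],
     [0,2,1,4,3,5,6,7,9,10,8,11],
     [0,6,1,2,3,4,5,9,7,10,8,11],
     [3,0,1,5,2,4,6,7,8,9,11,10],
     [1,2,0,3,5,4,7,6,8,9,10,11],
     [0,2,4,1,3,5,6,7,8,9,11,10],
     [0,1,3,4,2,5,7,6,9,8,10,11],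
     [0,1,2,4,5,3,6,8,7,10,9,11],
     [0,3,2,1,4,7,5,6,9,8,10,11],
     [1,0,2,3,4,6,7,5,8,10,9,11],
     [1,0,2,6,4,3,8,5,7,9,11,10],
     [0,1,2,3,4,5,6,7,8,9,10,11],
     [2,0,1,3,4,5,7,8,11,6,9,10],
     [2,0,1,3,4,5,7,8,11,6,9,10]]"

lemma hexad_perms_permutations:
  "\<sigma> \<in> set hexad_perms \<Longrightarrow> distinct \<sigma> \<and> length \<sigma> = 12 \<and> set \<sigma> \<subseteq> {..<12}"
  by (simp add: hexad_perms_def, elim disjE) simp_all

lemma hexad_perms_bij: "\<sigma> \<in> set hexad_perms \<Longrightarrow> bij_betw ((!) \<sigma>) {..<12} {..<12}"
proof -
  assume "\<sigma> \<in> set hexad_perms"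
  then have "distinct \<sigma>" "length \<sigma> = 12" "set \<sigma> \<subseteq> {..<12}"
    using hexad_perms_permutations by auto
  moreover from this have "set \<sigma> = {..<12}"
    by (metis card_lessThan card_subset_eq distinct_card finite_lessThan)
  ultimately show ?thesis
    by (intro bij_betw_nth) simp_all
qed

definition hexad_image :: "nat list \<Rightarrow> nat set set" where
  "hexad_image \<sigma> = (`) ((!) \<sigma>) ` set hexads"

lemma mem_hexad_image_iff:
  assumes "\<sigma> \<in> set hexad_perms" "K \<subseteq> {..<12}"
  shows "K \<in> hexad_image \<sigma> \<longleftrightarrow> trie_member (map ((!) (char_vec 12 K)) \<sigma>) hexad_trie"
proof -
  have bij: "bij_betw ((!) \<sigma>) {..<12} {..<12}"
    using hexad_perms_bij assms(1) .
  have "length \<sigma> = 12" "set \<sigma> \<subseteq> {..<12}"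
    using hexad_perms_permutations assms(1) by auto
  have "K \<in> hexad_image \<sigma> \<longleftrightarrow> (!) \<sigma> -` K \<inter> {..<12} \<in> set hexads"
    unfolding hexad_image_def
    by (rule mem_image_blocks_iff[OF bij]) (use hexads_subset assms(2) in auto)
  also have "\<dots> \<longleftrightarrow> trie_member (map ((!) (char_vec 12 K)) \<sigma>) hexad_trie"
    using mem_hexads_iff[of "(!) \<sigma> -` K \<inter> {..<12}"]
      char_vec_vimage_nth[OF \<open>length \<sigma> = 12\<close> \<open>set \<sigma> \<subseteq> {..<12}\<close>]
    by simp
  finally show ?thesis .
qed

definition permuted_vecs :: "bool list \<Rightarrow> bool list list" where
  "permuted_vecs w = map (\<lambda>\<sigma>. map ((!) w) \<sigma>) hexad_perms"

(* Permuting twelve symbolic bits once makes every permutation a single rewrite step in the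
   check below. *)
schematic_goal permuted_vecs_unfolded:
  "permuted_vecs [b0, b1, b2, b3, b4, b5, b6, b7, b8, b9, b10, b11] = ?vs"
  by (simp add: permuted_vecs_def hexad_perms_def)

lemma hexad_images_double_cover_check:
  "all_weight_vecs 6 12 (\<lambda>w. length (filter (\<lambda>v. trie_member v hexad_trie) (permuted_vecs w)) = 2)"
  by (simp add: trie_member_hexad_trie permuted_vecs_unfolded numeral_eq_Suc
      cong: all_weight_vecs_weak_cong trie_member_weak_cong filter_weak_cong)

definition hexad_large_set :: "nat set set multiset" where
  "hexad_large_set = mset (map hexad_image hexad_perms)"

lemma large_set_mult_hexad_large_set: "large_set_mult 5 6 12 2 {..<12} hexad_large_set"
  unfolding large_set_mult_def
proof (intro conjI ballI allI impI)
  show "finite {..<12::nat}" "card {..<12::nat} = 12"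
    by simp_all
next
  fix S assume "S \<in># hexad_large_set"
  then obtain \<sigma> where "\<sigma> \<in> set hexad_perms" "S = hexad_image \<sigma>"
    by (auto simp: hexad_large_set_def)
  then show "steiner_system 5 6 {..<12} S"
    using steiner_system_image[OF hexad_perms_bij steiner_system_hexads]
    unfolding hexad_image_def by blast
next
  fix K :: "nat set" assume K: "K \<subseteq> {..<12} \<and> card K = 6"
  have "size (filter_mset (\<lambda>S. K \<in> S) hexad_large_set)
      = length (filter (\<lambda>\<sigma>. K \<in> hexad_image \<sigma>) hexad_perms)"
    unfolding hexad_large_set_def mset_map filter_mset_image_mset size_image_mset
      mset_filter[symmetric] size_mset ..
  also have "\<dots> = length (filter (\<lambda>v. trie_member v hexad_trie) (permuted_vecs (char_vec 12 K)))"
    unfolding permuted_vecs_def filter_map comp_def length_map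
    using K by (intro arg_cong[where f = length] filter_cong) (auto simp: mem_hexad_image_iff)
  also have "\<dots> = 2"
    using all_weight_vecs_char_vec[OF hexad_images_double_cover_check] K by simp
  finally show "size (filter_mset (\<lambda>S. K \<in> S) hexad_large_set) = 2" .
qed

theorem lemma15:
  shows "LS_exists 4 5 11 2 \<and> LS_exists 3 4 10 2 \<and> LS_exists 5 6 12 2"
proof -
  have LS12: "LS_exists 5 6 12 2"
    unfolding LS_exists_def using large_set_mult_hexad_large_set by blast
  then have LS11: "LS_exists 4 5 11 2"
    using LS_exists_derived[of 4 5 11 2] by (simp add: numeral_eq_Suc)
  then have "LS_exists 3 4 10 2"
    using LS_exists_derived[of 3 4 10 2] by (simp add: numeral_eq_Suc)
  with LS11 LS12 show ?thesis
    by blast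
qed

end
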